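(* Let $n\ge 4$ and let $A=\{a_1,\dots,a_m\}$ with $1\le a_1<\dots<a_m\le n-1$. Then $QJ(n,A)$ is paired 2-coverable.
   Context: Let $[n]=\{1,\dots,n\}$. The Johnson graph $J(n,k)$ has as vertices the $k$-subsets of $[n]$, two being adjacent iff they share exactly $k-1$ elements. For a nonempty $A=\{a_1<a_2<\dots<a_m\}\subseteq[n]$, the graph $QJ(n,A)$ is formed by taking, for each $i$, a copy of $J(n,a_i)$ (called level $i$), and additionally joining a vertex $u$ of level $i$ to a vertex $v$ of level $i+1$ whenever $u\subseteq v$ (for $1\le i<m$); there are no other edges. A graph $G$ is \emph{paired 2-coverable} if for any four distinct vertices $u,v,x,y$ of $G$ there exist two vertex-disjoint paths $P$ and $Q$ in $G$ such that $P$ has endpoints $u$ and $v$, $Q$ has endpoints $x$ and $y$, and $V(P)\cup V(Q)=V(G)$. *)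

theory Defs
  imports Main
begin

definition is_path :: "'a set \<Rightarrow> ('a \<Rightarrow> 'a \<Rightarrow> bool) \<Rightarrow> 'a list \<Rightarrow> bool" where
  "is_path V E P \<longleftrightarrow> P \<noteq> [] \<and> distinct P \<and> set P \<subseteq> V \<and>
     (\<forall>i. Suc i < length P \<longrightarrow> E (P ! i) (P ! Suc i))"

definition paired_2_coverable :: "'a set \<Rightarrow> ('a \<Rightarrow> 'a \<Rightarrow> bool) \<Rightarrow> bool" where
  "paired_2_coverable V E \<longleftrightarrow>
     (\<forall>u\<in>V. \<forall>v\<in>V. \<forall>x\<in>V. \<forall>y\<in>V.
        distinct [u, v, x, y] \<longrightarrow>
        (\<exists>P Q. is_path V E P \<and> is_path V E Q \<and>
               hd P = u \<and> last P = v \<and> hd Q = x \<and> last Q = y \<and>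
               set P \<inter> set Q = {} \<and> set P \<union> set Q = V))"

definition QJ_verts :: "nat \<Rightarrow> nat set \<Rightarrow> nat set set" where
  "QJ_verts n A = {S. S \<subseteq> {1..n} \<and> card S \<in> A}"

definition consec :: "nat set \<Rightarrow> nat \<Rightarrow> nat \<Rightarrow> bool" where
  "consec A a b \<longleftrightarrow> a \<in> A \<and> b \<in> A \<and> a < b \<and> (\<forall>c\<in>A. \<not> (a < c \<and> c < b))"

definition QJ_adj :: "nat \<Rightarrow> nat set \<Rightarrow> nat set \<Rightarrow> nat set \<Rightarrow> bool" where
  "QJ_adj n A S T \<longleftrightarrow> S \<in> QJ_verts n A \<and> T \<in> QJ_verts n A \<and>
     ((card S = card T \<and> card (S \<inter> T) + 1 = card S) \<or>
      (S \<subseteq> T \<and> consec A (card S) (card T)) \<or>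
      (T \<subseteq> S \<and> consec A (card T) (card S)))"

end

theory Submission
  imports Defs
begin

(* Call a graph splicable through W if it is Hamilton-connected and paired 2-coverable by path
   systems that always traverse an edge inside W; such an edge is where a Hamilton path of
   another graph can be inserted. If V0 is splicable through V0, V1 is splicable through
   W \<subseteq> V1, and the edges between V0 and W give every vertex two neighbours across and two
   disjoint cross edges avoiding any two prescribed vertices on each side, then V0 \<union> V1 is
   splicable through V0. Johnson graphs are splicable: complete graphs and the octahedron J(4,2)
   are the base cases, and J(X,k) splits into a copy of J(X - {x},k) and a copy of
   J(X - {x},k-1) joined by inclusion. QJ(n,A) is obtained by splicing its lowest level
   J(n,a_1) onto QJ(n,A - {a_1}) along the inclusion edges into level a_2. *)

lemma is_path_iff_successively:
  "is_path V E P \<longleftrightarrow> P \<noteq> [] \<and> distinct P \<and> set P \<subseteq> V \<and> successively E P"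
  by (simp add: is_path_def successively_conv_nth)

lemma is_path_mono: "is_path V E P \<Longrightarrow> set P \<subseteq> V' \<Longrightarrow> is_path V' E P"
  by (auto simp: is_path_iff_successively)

lemma is_path_append:
  assumes "is_path V E xs" "is_path V E ys" "set xs \<inter> set ys = {}" "E (last xs) (hd ys)"
  shows "is_path V E (xs @ ys)"
  using assms by (auto simp: is_path_iff_successively successively_append_iff)

lemma is_path_appendE:
  assumes "is_path V E (xs @ ys)" "xs \<noteq> []" "ys \<noteq> []"
  shows "is_path V E xs" "is_path V E ys" "set xs \<inter> set ys = {}"
  using assms by (auto simp: is_path_iff_successively successively_append_iff)

lemma is_path_rev:
  assumes "is_path V E P" "\<And>a b. E a b \<Longrightarrow> E b a"
  shows "is_path V E (rev P)"
proof -
  have "successively E P" using assms(1) by (simp add: is_path_iff_successively)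
  hence "successively (\<lambda>x y. E y x) P" by (rule successively_mono) (use assms(2) in blast)
  thus ?thesis using assms(1) by (simp add: is_path_iff_successively)
qed

lemma is_path_map:
  assumes "is_path V E P" "inj_on f V" "\<forall>a\<in>V. \<forall>b\<in>V. E a b \<longrightarrow> E' (f a) (f b)"
  shows "is_path (f ` V) E' (map f P)"
proof -
  have P: "P \<noteq> []" "distinct P" "set P \<subseteq> V" "successively E P"
    using assms(1) by (auto simp: is_path_iff_successively)
  have "successively (\<lambda>x y. E' (f x) (f y)) P"
    by (rule successively_mono[OF P(4)]) (use P(3) assms(3) in blast)
  moreover have "distinct (map f P)" using P(2,3) assms(2) by (simp add: distinct_map inj_on_subset)
  ultimately show ?thesis using P by (auto simp: is_path_iff_successively successively_map)
qed

lemma is_path_cong: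
  assumes "\<And>a b. a \<in> V \<Longrightarrow> b \<in> V \<Longrightarrow> E a b = E' a b"
  shows "is_path V E P = is_path V E' P"
proof -
  have "set P \<subseteq> V \<Longrightarrow> successively E P = successively E' P"
    by (rule successively_cong) (use assms in auto)
  thus ?thesis by (auto simp: is_path_iff_successively)
qed

lemma is_path_splice:
  assumes "is_path V E (xs @ a # b # ys)" "is_path V E H" "set H \<inter> set (xs @ a # b # ys) = {}"
    "E a (hd H)" "E (last H) b"
  shows "is_path V E (xs @ a # H @ b # ys)"
proof -
  have "H \<noteq> []" using assms(2) by (simp add: is_path_iff_successively)
  from is_path_appendE[of V E "xs @ [a]" "b # ys"] assms(1)
  have prefix: "is_path V E (xs @ [a])" and suffix: "is_path V E (b # ys)"
    and disj: "set (xs @ [a]) \<inter> set (b # ys) = {}" by auto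
  have "is_path V E (H @ b # ys)"
    by (rule is_path_append[OF assms(2) suffix]) (use assms(3,5) in auto)
  hence "is_path V E ((xs @ [a]) @ (H @ b # ys))"
    by (rule is_path_append[OF prefix]) (use assms(3,4) disj \<open>H \<noteq> []\<close> in auto)
  thus ?thesis by simp
qed

lemma is_path_complete:
  assumes "\<forall>a\<in>V. \<forall>b\<in>V. a \<noteq> b \<longrightarrow> E a b" "P \<noteq> []" "distinct P" "set P \<subseteq> V"
  shows "is_path V E P"
proof -
  have "successively (\<noteq>) P"
    using \<open>distinct P\<close> by (induction P rule: induct_list012) auto
  hence "successively E P"
    by (rule successively_mono) (use assms in blast)
  thus ?thesis using assms by (simp add: is_path_iff_successively)
qed

lemma length_ge_2_if_hd_neq_last: "P \<noteq> [] \<Longrightarrow> hd P \<noteq> last P \<Longrightarrow> 2 \<le> length P"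
  by (cases P; cases "tl P") auto

definition traverses_edge_in :: "'a set \<Rightarrow> 'a list \<Rightarrow> bool" where
  "traverses_edge_in W P \<longleftrightarrow> (\<exists>xs a b ys. P = xs @ a # b # ys \<and> a \<in> W \<and> b \<in> W)"

lemma traverses_edge_in_append:
  "traverses_edge_in W P \<Longrightarrow> traverses_edge_in W (xs @ P)"
  "traverses_edge_in W P \<Longrightarrow> traverses_edge_in W (P @ ys)"
  unfolding traverses_edge_in_def by (metis append.assoc, metis append.assoc append_Cons)

lemma traverses_edge_in_mono: "traverses_edge_in W P \<Longrightarrow> W \<subseteq> W' \<Longrightarrow> traverses_edge_in W' P"
  unfolding traverses_edge_in_def by blast

lemma traverses_edge_in_map: "traverses_edge_in W P \<Longrightarrow> traverses_edge_in (f ` W) (map f P)"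
  unfolding traverses_edge_in_def
  by (elim exE conjE, intro exI[of _ "map f xs" for xs]) auto

lemma traverses_edge_in_rev: "traverses_edge_in W P \<Longrightarrow> traverses_edge_in W (rev P)"
  unfolding traverses_edge_in_def
proof (elim exE conjE)
  fix xs a b ys assume "P = xs @ a # b # ys" "a \<in> W" "b \<in> W"
  thus "\<exists>xs a b ys. rev P = xs @ a # b # ys \<and> a \<in> W \<and> b \<in> W"
    by (intro exI[of _ "rev ys"] exI[of _ b] exI[of _ a] exI[of _ "rev xs"]) simp
qed

lemma traverses_edge_in_subset:
  assumes "set P \<subseteq> W" "2 \<le> length P"
  shows "traverses_edge_in W P"
proof -
  obtain a b ys where "P = a # b # ys"
    using assms(2) by (metis Suc_le_length_iff numeral_2_eq_2)
  thus ?thesis using assms(1) unfolding traverses_edge_in_def by (intro exI[of _ "[]"]) auto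
qed

lemma traverses_edge_in_splice:
  "set H = W \<Longrightarrow> 2 \<le> length H \<Longrightarrow> traverses_edge_in W (xs @ a # H @ b # ys)"
proof -
  assume "set H = W" "2 \<le> length H"
  hence "traverses_edge_in W ((xs @ [a]) @ H @ (b # ys))"
    by (intro traverses_edge_in_append traverses_edge_in_subset) auto
  thus ?thesis by simp
qed

section \<open>Splicable graphs\<close>

definition hamiltonian_connected_through :: "'a set \<Rightarrow> ('a \<Rightarrow> 'a \<Rightarrow> bool) \<Rightarrow> 'a set \<Rightarrow> bool" where
  "hamiltonian_connected_through V E W \<longleftrightarrow> (\<forall>s\<in>V. \<forall>t\<in>V. s \<noteq> t \<longrightarrow>
     (\<exists>P. is_path V E P \<and> hd P = s \<and> last P = t \<and> set P = V \<and> traverses_edge_in W P))"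

definition paired_cover_through ::
  "'a set \<Rightarrow> ('a \<Rightarrow> 'a \<Rightarrow> bool) \<Rightarrow> 'a set \<Rightarrow> 'a \<Rightarrow> 'a \<Rightarrow> 'a \<Rightarrow> 'a \<Rightarrow> bool" where
  "paired_cover_through V E W u v x y \<longleftrightarrow> (\<exists>P Q. is_path V E P \<and> is_path V E Q \<and>
     hd P = u \<and> last P = v \<and> hd Q = x \<and> last Q = y \<and>
     set P \<inter> set Q = {} \<and> set P \<union> set Q = V \<and> (traverses_edge_in W P \<or> traverses_edge_in W Q))"

definition paired_2_coverable_through :: "'a set \<Rightarrow> ('a \<Rightarrow> 'a \<Rightarrow> bool) \<Rightarrow> 'a set \<Rightarrow> bool" where
  "paired_2_coverable_through V E W \<longleftrightarrow> (\<forall>u\<in>V. \<forall>v\<in>V. \<forall>x\<in>V. \<forall>y\<in>V.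
     distinct [u, v, x, y] \<longrightarrow> paired_cover_through V E W u v x y)"

definition splicable :: "'a set \<Rightarrow> ('a \<Rightarrow> 'a \<Rightarrow> bool) \<Rightarrow> 'a set \<Rightarrow> bool" where
  "splicable V E W \<longleftrightarrow> hamiltonian_connected_through V E W \<and> paired_2_coverable_through V E W"

lemma splicable_imp_paired_2_coverable: "splicable V E W \<Longrightarrow> paired_2_coverable V E"
  unfolding splicable_def paired_2_coverable_through_def paired_cover_through_def
    paired_2_coverable_def by blast

lemma paired_cover_through_swap:
  "paired_cover_through V E W u v x y \<Longrightarrow> paired_cover_through V E W x y u v"
  unfolding paired_cover_through_def by blast

lemma paired_cover_through_rev_first:
  assumes "paired_cover_through V E W u v x y" "\<And>a b. E a b \<Longrightarrow> E b a"
  shows "paired_cover_through V E W v u x y"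
proof -
  obtain P Q where *: "is_path V E P" "is_path V E Q" "hd P = u" "last P = v" "hd Q = x" "last Q = y"
    "set P \<inter> set Q = {}" "set P \<union> set Q = V" "traverses_edge_in W P \<or> traverses_edge_in W Q"
    using assms(1) unfolding paired_cover_through_def by blast
  have "P \<noteq> []" using *(1) by (simp add: is_path_iff_successively)
  thus ?thesis
    unfolding paired_cover_through_def using * is_path_rev[OF *(1) assms(2)] traverses_edge_in_rev
    by (intro exI[of _ "rev P"] exI[of _ Q]) (auto simp: hd_rev last_rev)
qed

lemma paired_cover_through_rev_second:
  "paired_cover_through V E W u v x y \<Longrightarrow> (\<And>a b. E a b \<Longrightarrow> E b a) \<Longrightarrow>
   paired_cover_through V E W u v y x"
  by (meson paired_cover_through_rev_first paired_cover_through_swap)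

lemma splicable_cong:
  assumes "splicable V E W" "\<And>a b. a \<in> V \<Longrightarrow> b \<in> V \<Longrightarrow> E a b = E' a b"
  shows "splicable V E' W"
proof -
  have "is_path V E P = is_path V E' P" for P by (rule is_path_cong) (use assms(2) in auto)
  with assms(1) show ?thesis
    unfolding splicable_def hamiltonian_connected_through_def paired_2_coverable_through_def
      paired_cover_through_def by simp
qed

lemma splicable_mono:
  assumes "splicable V E W" "W \<subseteq> W'"
  shows "splicable V E W'"
proof -
  have W': "traverses_edge_in W P \<Longrightarrow> traverses_edge_in W' P" for P
    using traverses_edge_in_mono assms(2) by blast
  have "hamiltonian_connected_through V E W'"
    using assms(1) W' unfolding splicable_def hamiltonian_connected_through_def by blast
  moreover have "paired_cover_through V E W' u v x y"
    if "paired_cover_through V E W u v x y" for u v x y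
    using that W' unfolding paired_cover_through_def by blast
  ultimately show ?thesis
    using assms(1) unfolding splicable_def paired_2_coverable_through_def by blast
qed

lemma hamiltonian_connected_through_image:
  assumes hc: "hamiltonian_connected_through V E W" and inj: "inj_on f V"
    and adj: "\<forall>a\<in>V. \<forall>b\<in>V. E a b \<longrightarrow> E' (f a) (f b)"
  shows "hamiltonian_connected_through (f ` V) E' (f ` W)"
  unfolding hamiltonian_connected_through_def Ball_image_comp comp_def
proof (intro ballI impI)
  fix s t assume "s \<in> V" "t \<in> V" "f s \<noteq> f t"
  moreover from this have "s \<noteq> t" by blast
  ultimately obtain P where P: "is_path V E P" "hd P = s" "last P = t" "set P = V"
    "traverses_edge_in W P"
    using hc unfolding hamiltonian_connected_through_def by blast
  have "P \<noteq> []" using P(1) by (simp add: is_path_iff_successively)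
  moreover have "is_path (f ` V) E' (map f P)" by (rule is_path_map[OF P(1) inj adj])
  ultimately show "\<exists>P'. is_path (f ` V) E' P' \<and> hd P' = f s \<and> last P' = f t \<and> set P' = f ` V \<and>
      traverses_edge_in (f ` W) P'"
    using P traverses_edge_in_map
    by (intro exI[of _ "map f P"]) (auto simp: hd_map last_map)
qed

lemma paired_cover_through_image:
  assumes cover: "paired_cover_through V E W u v x y" and inj: "inj_on f V"
    and adj: "\<forall>a\<in>V. \<forall>b\<in>V. E a b \<longrightarrow> E' (f a) (f b)"
  shows "paired_cover_through (f ` V) E' (f ` W) (f u) (f v) (f x) (f y)"
proof -
  obtain P Q where *: "is_path V E P" "is_path V E Q" "hd P = u" "last P = v"
    "hd Q = x" "last Q = y" "set P \<inter> set Q = {}" "set P \<union> set Q = V"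
    "traverses_edge_in W P \<or> traverses_edge_in W Q"
    using cover unfolding paired_cover_through_def by blast
  have disjoint: "set (map f P) \<inter> set (map f Q) = {}"
    using *(7,8) inj_on_image_Int[OF inj, of "set P" "set Q"] by auto
  have edge: "traverses_edge_in (f ` W) (map f P) \<or> traverses_edge_in (f ` W) (map f Q)"
    using *(9) traverses_edge_in_map by blast
  have paths: "is_path (f ` V) E' (map f P)" "is_path (f ` V) E' (map f Q)"
    using is_path_map[OF *(1) inj adj]
      is_path_map[OF *(2) inj adj] .
  have "P \<noteq> []" "Q \<noteq> []" using *(1,2) by (auto simp: is_path_iff_successively)
  then show ?thesis
    unfolding paired_cover_through_def
    by (intro exI[of _ "map f P"] exI[of _ "map f Q"] conjI)
      (use * paths disjoint edge in \<open>auto simp: hd_map last_map\<close>)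
qed

lemma splicable_image:
  assumes splicable: "splicable V E W" and inj: "inj_on f V"
    and adj: "\<forall>a\<in>V. \<forall>b\<in>V. E a b \<longrightarrow> E' (f a) (f b)"
  shows "splicable (f ` V) E' (f ` W)"
proof -
  have "paired_cover_through (f ` V) E' (f ` W) (f u) (f v) (f x) (f y)"
    if "u \<in> V" "v \<in> V" "x \<in> V" "y \<in> V" "distinct [f u, f v, f x, f y]" for u v x y
  proof (rule paired_cover_through_image[OF _ inj adj])
    have "distinct [u, v, x, y]" using that(5) by auto
    thus "paired_cover_through V E W u v x y"
      using splicable that unfolding splicable_def paired_2_coverable_through_def by blast
  qed
  moreover have "hamiltonian_connected_through (f ` V) E' (f ` W)"
    using hamiltonian_connected_through_image[OF _ inj adj] splicable by (simp add: splicable_def)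
  ultimately show ?thesis
    unfolding splicable_def paired_2_coverable_through_def Ball_image_comp comp_def by blast
qed

lemma splicable_complete:
  assumes "finite V" and complete: "\<forall>a\<in>V. \<forall>b\<in>V. a \<noteq> b \<longrightarrow> E a b"
  shows "splicable V E V"
proof -
  have "hamiltonian_connected_through V E V" unfolding hamiltonian_connected_through_def
  proof (intro ballI impI)
    fix s t assume st: "s \<in> V" "t \<in> V" "s \<noteq> t"
    obtain xs where xs: "distinct xs" "set xs = V - {s,t}"
      using finite_distinct_list[of "V - {s,t}"] \<open>finite V\<close> by auto
    let ?P = "s # xs @ [t]"
    have "distinct ?P" using xs st by auto
    hence "is_path V E ?P" using is_path_complete[OF complete, of ?P] xs st by auto
    moreover have "traverses_edge_in V ?P" using st xs by (intro traverses_edge_in_subset) auto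
    ultimately show "\<exists>P. is_path V E P \<and> hd P = s \<and> last P = t \<and> set P = V \<and>
      traverses_edge_in V P" using xs st by (intro exI[of _ ?P]) auto
  qed
  moreover have "paired_2_coverable_through V E V" unfolding paired_2_coverable_through_def
  proof (intro ballI impI)
    fix u v x y assume m: "u \<in> V" "v \<in> V" "x \<in> V" "y \<in> V" and d: "distinct [u, v, x, y]"
    obtain xs where xs: "distinct xs" "set xs = V - {u,v,x,y}"
      using finite_distinct_list[of "V - {u,v,x,y}"] \<open>finite V\<close> by auto
    let ?P = "u # xs @ [v]" and ?Q = "[x, y]"
    have "distinct ?P" "distinct ?Q" using xs d by auto
    hence paths: "is_path V E ?P" "is_path V E ?Q"
      using is_path_complete[OF complete, of ?P] is_path_complete[OF complete, of ?Q] xs m by auto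
    have edge: "traverses_edge_in V ?Q" using m by (intro traverses_edge_in_subset) auto
    show "paired_cover_through V E V u v x y" unfolding paired_cover_through_def
      by (rule exI[of _ ?P], rule exI[of _ ?Q]) (use paths edge xs m d in auto)
  qed
  ultimately show ?thesis by (simp add: splicable_def)
qed

section \<open>Splicing two graphs\<close>

definition avoiding_2_matching :: "'a set \<Rightarrow> 'b set \<Rightarrow> ('a \<Rightarrow> 'b \<Rightarrow> bool) \<Rightarrow> bool" where
  "avoiding_2_matching L R E \<longleftrightarrow> (\<forall>e1 e2 f1 f2. \<exists>p q p' q'.
     p \<in> L - {e1, e2} \<and> q \<in> L - {e1, e2} \<and> p \<noteq> q \<and>
     p' \<in> R - {f1, f2} \<and> q' \<in> R - {f1, f2} \<and> p' \<noteq> q' \<and> E p p' \<and> E q q')"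

definition splice_link :: "'a set \<Rightarrow> 'b set \<Rightarrow> ('a \<Rightarrow> 'b \<Rightarrow> bool) \<Rightarrow> bool" where
  "splice_link L R E \<longleftrightarrow> (\<forall>a\<in>L. 2 \<le> card {b\<in>R. E a b}) \<and> (\<forall>b\<in>R. 2 \<le> card {a\<in>L. E a b}) \<and>
     avoiding_2_matching L R E"

lemma card_ge_2_obtains:
  assumes "2 \<le> card A"
  obtains a b where "a \<in> A" "b \<in> A" "a \<noteq> b"
proof -
  obtain B where "B \<subseteq> A" "card B = 2" using obtain_subset_with_card_n assms by metis
  then obtain a b where "B = {a, b}" "a \<noteq> b" using card_2_iff by metis
  thus ?thesis using that \<open>B \<subseteq> A\<close> by auto
qed

(* Splicing a Hamilton path of V1 into an edge of a path through V0, or one of V0 into a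
   W-edge of a path through V1, turns path systems of the parts into ones of the union. *)
locale splice =
  fixes V0 V1 W :: "'a set" and E :: "'a \<Rightarrow> 'a \<Rightarrow> bool"
  assumes disjoint: "V0 \<inter> V1 = {}" and W_subset: "W \<subseteq> V1"
    and sym: "\<And>a b. E a b \<Longrightarrow> E b a"
    and splicable_V0: "splicable V0 E V0" and splicable_V1: "splicable V1 E W"
    and link: "splice_link V0 W E"
begin

abbreviation "V \<equiv> V0 \<union> V1"

lemma neighbours_in_W:
  assumes "a \<in> V0"
  obtains w1 w2 where "w1 \<in> W" "w2 \<in> W" "w1 \<noteq> w2" "E a w1" "E a w2"
proof -
  have "2 \<le> card {w\<in>W. E a w}" using link assms unfolding splice_link_def by blast
  thus ?thesis using that by (elim card_ge_2_obtains) auto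
qed

lemma neighbours_in_V0:
  assumes "w \<in> W"
  obtains a1 a2 where "a1 \<in> V0" "a2 \<in> V0" "a1 \<noteq> a2" "E w a1" "E w a2"
proof -
  have "2 \<le> card {a\<in>V0. E a w}" using link assms unfolding splice_link_def by blast
  thus ?thesis using that sym by (elim card_ge_2_obtains) auto
qed

lemma matching:
  obtains p q p' q' where "p \<in> V0 - {e, e'}" "q \<in> V0 - {e, e'}" "p \<noteq> q"
    "p' \<in> W - {f, f'}" "q' \<in> W - {f, f'}" "p' \<noteq> q'" "E p p'" "E q q'"
  using link unfolding splice_link_def avoiding_2_matching_def by blast

lemma hamilton_path_V0:
  assumes "s \<in> V0" "t \<in> V0" "s \<noteq> t"
  obtains H where "is_path V E H" "hd H = s" "last H = t" "set H = V0"
  using splicable_V0 assms is_path_mono[of V0 E _ V]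
  unfolding splicable_def hamiltonian_connected_through_def by (metis Un_upper1 order_refl)

lemma hamilton_path_V1:
  assumes "s \<in> V1" "t \<in> V1" "s \<noteq> t"
  obtains K where "is_path V E K" "hd K = s" "last K = t" "set K = V1" "traverses_edge_in W K"
  using splicable_V1 assms is_path_mono[of V1 E _ V]
  unfolding splicable_def hamiltonian_connected_through_def by (metis Un_upper2 order_refl)

lemma paired_cover_V0:
  assumes "distinct [u, v, x, y]" "u \<in> V0" "v \<in> V0" "x \<in> V0" "y \<in> V0"
  obtains P Q where "is_path V E P" "is_path V E Q" "hd P = u" "last P = v" "hd Q = x" "last Q = y"
    "set P \<inter> set Q = {}" "set P \<union> set Q = V0"
proof -
  have "paired_cover_through V0 E V0 u v x y"
    using splicable_V0 assms unfolding splicable_def paired_2_coverable_through_def by blast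
  thus ?thesis using that is_path_mono[of V0 E _ V] unfolding paired_cover_through_def by blast
qed

lemma paired_cover_V1:
  assumes "distinct [u, v, x, y]" "u \<in> V1" "v \<in> V1" "x \<in> V1" "y \<in> V1"
  obtains P Q where "is_path V E P" "is_path V E Q" "hd P = u" "last P = v" "hd Q = x" "last Q = y"
    "set P \<inter> set Q = {}" "set P \<union> set Q = V1" "traverses_edge_in W P \<or> traverses_edge_in W Q"
proof -
  have "paired_cover_through V1 E W u v x y"
    using splicable_V1 assms unfolding splicable_def paired_2_coverable_through_def by blast
  thus ?thesis using that is_path_mono[of V1 E _ V] unfolding paired_cover_through_def by blast
qed

lemma splice_in_V1:
  assumes "is_path V E (a # b # ys)" "a \<in> V0" "b \<in> V0" "set (a # b # ys) \<inter> V1 = {}"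
  obtains K where "set K = V1" "is_path V E (a # K @ b # ys)"
proof -
  obtain a' b' where ab': "a' \<in> W" "b' \<in> W" "a' \<noteq> b'" "E a a'" "E b b'"
    using neighbours_in_W[OF assms(2)] neighbours_in_W[OF assms(3)] by metis
  obtain K where K: "is_path V E K" "hd K = a'" "last K = b'" "set K = V1"
    by (rule hamilton_path_V1[of a' b']) (use ab' W_subset in auto)
  have "is_path V E ([] @ a # K @ b # ys)"
    by (rule is_path_splice) (use assms K ab' sym[OF ab'(5)] in auto)
  thus ?thesis using that K by auto
qed

lemma splice_in_V0:
  assumes "is_path V E (xs @ a # b # ys)" "a \<in> W" "b \<in> W" "set (xs @ a # b # ys) \<inter> V0 = {}"
  obtains H where "set H = V0" "2 \<le> length H" "is_path V E (xs @ a # H @ b # ys)"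
proof -
  obtain a' b' where ab': "a' \<in> V0" "b' \<in> V0" "a' \<noteq> b'" "E a a'" "E b b'"
    using neighbours_in_V0[OF assms(2)] neighbours_in_V0[OF assms(3)] by metis
  obtain H where H: "is_path V E H" "hd H = a'" "last H = b'" "set H = V0"
    by (rule hamilton_path_V0[of a' b']) (use ab' in auto)
  have "H \<noteq> []" using H by (simp add: is_path_iff_successively)
  hence "2 \<le> length H" using length_ge_2_if_hd_neq_last[of H] H ab'(3) by simp
  moreover have "is_path V E (xs @ a # H @ b # ys)"
    by (rule is_path_splice) (use assms H ab' sym[OF ab'(5)] in auto)
  ultimately show ?thesis using that H by auto
qed

lemma hamilton_path_within_V0:
  assumes "s \<in> V0" "t \<in> V0" "s \<noteq> t"
  shows "\<exists>P. is_path V E P \<and> hd P = s \<and> last P = t \<and> set P = V \<and> traverses_edge_in V0 P"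
proof -
  obtain H where H: "is_path V E H" "hd H = s" "last H = t" "set H = V0"
    using hamilton_path_V0 assms by blast
  obtain p where p: "p \<in> V0 - {s, t}" using matching[where e = s and e' = t] by blast
  have "H \<noteq> []" using H by (simp add: is_path_iff_successively)
  then obtain a b zs where Hs: "H = a # b # zs" "b \<in> V0" "zs \<noteq> []"
    using H p by (cases H; cases "tl H"; cases "tl (tl H)") auto
  have "set (a # b # zs) \<inter> V1 = {}" "a \<in> V0" using H(4) Hs disjoint by auto
  then obtain K where K: "set K = V1" "is_path V E (a # K @ b # zs)"
    using splice_in_V1[of a b zs] H(1) Hs by auto
  have "hd zs \<in> V0" using Hs H(4) by auto
  hence "traverses_edge_in V0 (a # K @ b # zs)" unfolding traverses_edge_in_def
    by (intro exI[of _ "a # K"] exI[of _ b] exI[of _ "hd zs"] exI[of _ "tl zs"]) (use Hs in auto)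
  thus ?thesis using K H Hs by (intro exI[of _ "a # K @ b # zs"]) (auto simp: last_append)
qed

lemma splice_V0_into_edge:
  assumes "is_path V E P" "set P \<inter> V0 = {}" "traverses_edge_in W P"
  obtains P' where "is_path V E P'" "hd P' = hd P" "last P' = last P" "set P' = set P \<union> V0"
    "traverses_edge_in V0 P'"
proof -
  obtain xs a b ys where P: "P = xs @ a # b # ys" "a \<in> W" "b \<in> W"
    using assms(3) unfolding traverses_edge_in_def by blast
  then obtain H where H: "set H = V0" "2 \<le> length H" "is_path V E (xs @ a # H @ b # ys)"
    using splice_in_V0[of xs a b ys] assms(1,2) by auto
  show ?thesis
  proof (rule that[OF H(3)])
    show "hd (xs @ a # H @ b # ys) = hd P" using P by (simp add: hd_append)
    show "last (xs @ a # H @ b # ys) = last P" using P by (simp add: last_append)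
    show "set (xs @ a # H @ b # ys) = set P \<union> V0" unfolding P(1) H(1)[symmetric] by auto
    show "traverses_edge_in V0 (xs @ a # H @ b # ys)" using traverses_edge_in_splice[OF H(1,2)] .

  qed
qed

lemma hamilton_path_within_V1:
  assumes "s \<in> V1" "t \<in> V1" "s \<noteq> t"
  shows "\<exists>P. is_path V E P \<and> hd P = s \<and> last P = t \<and> set P = V \<and> traverses_edge_in V0 P"
proof -
  obtain K where K: "is_path V E K" "hd K = s" "last K = t" "set K = V1" "traverses_edge_in W K"
    using hamilton_path_V1 assms by blast
  have "set K \<inter> V0 = {}" using K(4) disjoint by auto
  then obtain P where "is_path V E P" "hd P = hd K" "last P = last K" "set P = set K \<union> V0"
    "traverses_edge_in V0 P"
    by (rule splice_V0_into_edge[OF K(1) _ K(5)])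
  thus ?thesis using K by (intro exI[of _ P]) auto
qed

lemma hamilton_path_V0_V1:
  assumes "s \<in> V0" "t \<in> V1"
  shows "\<exists>P. is_path V E P \<and> hd P = s \<and> last P = t \<and> set P = V \<and> traverses_edge_in V0 P"
proof -
  obtain p q p' q' where m: "p \<in> V0 - {s, s}" "q \<in> V0 - {s, s}" "p \<noteq> q"
    "p' \<in> W - {t, t}" "q' \<in> W - {t, t}" "p' \<noteq> q'" "E p p'" "E q q'"
    by (rule matching)
  obtain H where H: "is_path V E H" "hd H = s" "last H = p" "set H = V0"
    by (rule hamilton_path_V0[of s p]) (use assms m(1) in auto)
  obtain K where K: "is_path V E K" "hd K = p'" "last K = t" "set K = V1"
    by (rule hamilton_path_V1[of p' t]) (use assms m(4) W_subset in auto)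
  have ne: "H \<noteq> []" "K \<noteq> []" using H(1) K(1) by (auto simp: is_path_iff_successively)
  have "is_path V E (H @ K)"
    by (rule is_path_append[OF H(1) K(1)]) (use H(3,4) K(2,4) m(7) disjoint in auto)
  moreover have "traverses_edge_in V0 (H @ K)"
    using H m(1) length_ge_2_if_hd_neq_last[OF ne(1)]
    by (intro traverses_edge_in_append(2) traverses_edge_in_subset) auto
  moreover have "hd (H @ K) = s" "last (H @ K) = t" "set (H @ K) = V"
    using ne H(2,4) K(3,4) by auto
  ultimately show ?thesis by blast
qed

lemma hamiltonian_connected: "hamiltonian_connected_through V E V0"
  unfolding hamiltonian_connected_through_def
proof (intro ballI impI)
  fix s t assume st: "s \<in> V" "t \<in> V" "s \<noteq> t"
  consider "s \<in> V0" "t \<in> V0" | "s \<in> V0" "t \<in> V1" | "s \<in> V1" "t \<in> V0" | "s \<in> V1" "t \<in> V1"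
    using st by blast
  thus "\<exists>P. is_path V E P \<and> hd P = s \<and> last P = t \<and> set P = V \<and> traverses_edge_in V0 P"
  proof cases
    case 1 thus ?thesis using st hamilton_path_within_V0 by blast
  next
    case 2 thus ?thesis using hamilton_path_V0_V1 by blast
  next
    case 3
    then obtain P where P: "is_path V E P" "hd P = t" "last P = s" "set P = V" "traverses_edge_in V0 P"
      using hamilton_path_V0_V1 by blast
    have "P \<noteq> []" using P by (simp add: is_path_iff_successively)
    thus ?thesis using P is_path_rev[OF P(1) sym] traverses_edge_in_rev
      by (intro exI[of _ "rev P"]) (auto simp: hd_rev last_rev)
  next
    case 4 thus ?thesis using st hamilton_path_within_V1 by blast
  qed
qed

lemma cover_all_in_V1:
  assumes "distinct [u, v, x, y]" "u \<in> V1" "v \<in> V1" "x \<in> V1" "y \<in> V1"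
  shows "paired_cover_through V E V0 u v x y"
proof -
  have splice_P: "paired_cover_through V E V0 (hd P) (last P) (hd Q) (last Q)"
    if PQ: "is_path V E P" "is_path V E Q" "set P \<inter> set Q = {}" "set P \<union> set Q = V1"
      "traverses_edge_in W P" for P Q
  proof -
    have "set P \<inter> V0 = {}" using PQ(4) disjoint by auto
    then obtain P' where "is_path V E P'" "hd P' = hd P" "last P' = last P"
      "set P' = set P \<union> V0" "traverses_edge_in V0 P'"
      by (rule splice_V0_into_edge[OF PQ(1) _ PQ(5)])
    thus ?thesis unfolding paired_cover_through_def using PQ(2-4) disjoint
      by (intro exI[of _ P'] exI[of _ Q]) auto
  qed
  obtain P Q where *: "is_path V E P" "is_path V E Q" "hd P = u" "last P = v" "hd Q = x" "last Q = y"
    "set P \<inter> set Q = {}" "set P \<union> set Q = V1" "traverses_edge_in W P \<or> traverses_edge_in W Q"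
    by (rule paired_cover_V1[OF assms])
  from *(9) show ?thesis
  proof
    assume "traverses_edge_in W P" thus ?thesis using splice_P[OF *(1,2,7,8)] *(3-6) by simp
  next
    assume "traverses_edge_in W Q"
    hence "paired_cover_through V E V0 x y u v"
      using splice_P[OF *(2,1)] *(3-8) by (simp add: Int_commute Un_commute)
    thus ?thesis by (rule paired_cover_through_swap)
  qed
qed

lemma cover_all_in_V0:
  assumes "distinct [u, v, x, y]" "u \<in> V0" "v \<in> V0" "x \<in> V0" "y \<in> V0"
  shows "paired_cover_through V E V0 u v x y"
proof -
  obtain P Q where *: "is_path V E P" "is_path V E Q" "hd P = u" "last P = v" "hd Q = x" "last Q = y"
    "set P \<inter> set Q = {}" "set P \<union> set Q = V0"
    by (rule paired_cover_V0[OF assms])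
  have ne: "P \<noteq> []" "Q \<noteq> []" using *(1,2) by (auto simp: is_path_iff_successively)
  have "2 \<le> length P" "2 \<le> length Q"
    using length_ge_2_if_hd_neq_last ne *(3-6) assms(1) by auto
  then obtain a b ys where P: "P = a # b # ys" by (cases P; cases "tl P") auto
  have edge_Q: "traverses_edge_in V0 Q" using *(8) \<open>2 \<le> length Q\<close> by (intro traverses_edge_in_subset) auto
  have "set (a # b # ys) \<inter> V1 = {}" "a \<in> V0" "b \<in> V0" using *(8) P disjoint by auto
  then obtain K where K: "set K = V1" "is_path V E (a # K @ b # ys)"
    using splice_in_V1[of a b ys] *(1) P by auto
  show ?thesis unfolding paired_cover_through_def
    by (rule exI[of _ "a # K @ b # ys"], rule exI[of _ Q]) (use * K P edge_Q disjoint in auto)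
qed

lemma cover_only_y_in_V1:
  assumes "distinct [u, v, x, y]" "u \<in> V0" "v \<in> V0" "x \<in> V0" "y \<in> V1"
  shows "paired_cover_through V E V0 u v x y"
proof -
  obtain p q p' q' where m: "p \<in> V0 - {u, v}" "q \<in> V0 - {u, v}" "p \<noteq> q"
    "p' \<in> W - {y, y}" "q' \<in> W - {y, y}" "p' \<noteq> q'" "E p p'" "E q q'"
    by (rule matching)
  obtain w w' where w: "w \<in> V0" "w \<notin> {u, v, x}" "w' \<in> W" "w' \<noteq> y" "E w w'"
    using m by (cases "p = x") auto
  obtain P Q where *: "is_path V E P" "is_path V E Q" "hd P = u" "last P = v" "hd Q = x" "last Q = w"
    "set P \<inter> set Q = {}" "set P \<union> set Q = V0"
    by (rule paired_cover_V0[of u v x w]) (use assms w in auto)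
  obtain K where K: "is_path V E K" "hd K = w'" "last K = y" "set K = V1"
    by (rule hamilton_path_V1[of w' y]) (use assms w W_subset in auto)
  have ne: "P \<noteq> []" "Q \<noteq> []" "K \<noteq> []" using *(1,2) K(1) by (auto simp: is_path_iff_successively)
  have "2 \<le> length P" using length_ge_2_if_hd_neq_last[OF ne(1)] *(3,4) assms(1) by auto
  hence edge_P: "traverses_edge_in V0 P" using *(8) by (intro traverses_edge_in_subset) auto
  have QK: "is_path V E (Q @ K)"
    by (rule is_path_append[OF *(2) K(1)]) (use *(6,8) K(2,4) w disjoint in auto)
  show ?thesis unfolding paired_cover_through_def
    by (rule exI[of _ P], rule exI[of _ "Q @ K"]) (use * K QK ne edge_P disjoint in auto)
qed

lemma cover_only_u_in_V0:
  assumes "distinct [u, v, x, y]" "u \<in> V0" "v \<in> V1" "x \<in> V1" "y \<in> V1"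
  shows "paired_cover_through V E V0 u v x y"
proof -
  obtain p q p' q' where m: "p \<in> V0 - {u, u}" "q \<in> V0 - {u, u}" "p \<noteq> q"
    "p' \<in> W - {v, x}" "q' \<in> W - {v, x}" "p' \<noteq> q'" "E p p'" "E q q'"
    by (rule matching)
  obtain w w' where w: "w \<in> V0" "w \<noteq> u" "w' \<in> W" "w' \<notin> {v, x, y}" "E w w'"
    using m by (cases "p' = y") auto
  obtain H where H: "is_path V E H" "hd H = u" "last H = w" "set H = V0"
    by (rule hamilton_path_V0[of u w]) (use assms w in auto)
  obtain P Q where *: "is_path V E P" "is_path V E Q" "hd P = w'" "last P = v" "hd Q = x" "last Q = y"
    "set P \<inter> set Q = {}" "set P \<union> set Q = V1"
    by (rule paired_cover_V1[of w' v x y]) (use assms w W_subset in auto)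
  have ne: "P \<noteq> []" "Q \<noteq> []" "H \<noteq> []" using *(1,2) H(1) by (auto simp: is_path_iff_successively)
  have "2 \<le> length H" using length_ge_2_if_hd_neq_last[OF ne(3)] H(2,3) w(2) by auto
  hence edge_HP: "traverses_edge_in V0 (H @ P)"
    using H(4) by (intro traverses_edge_in_append(2) traverses_edge_in_subset) auto
  have HP: "is_path V E (H @ P)"
    by (rule is_path_append[OF H(1) *(1)]) (use *(3,8) H(3,4) w disjoint in auto)
  show ?thesis unfolding paired_cover_through_def
    by (rule exI[of _ "H @ P"], rule exI[of _ Q]) (use * H HP ne edge_HP disjoint in auto)
qed

lemma cover_pairs_separated:
  assumes "distinct [u, v, x, y]" "u \<in> V0" "v \<in> V0" "x \<in> V1" "y \<in> V1"
  shows "paired_cover_through V E V0 u v x y"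
proof -
  obtain H where H: "is_path V E H" "hd H = u" "last H = v" "set H = V0"
    by (rule hamilton_path_V0[of u v]) (use assms in auto)
  obtain K where K: "is_path V E K" "hd K = x" "last K = y" "set K = V1"
    by (rule hamilton_path_V1[of x y]) (use assms in auto)
  have "H \<noteq> []" using H by (auto simp: is_path_iff_successively)
  hence "2 \<le> length H" using length_ge_2_if_hd_neq_last H(2,3) assms(1) by auto
  hence edge_H: "traverses_edge_in V0 H" using H(4) by (intro traverses_edge_in_subset) auto
  show ?thesis unfolding paired_cover_through_def
    by (rule exI[of _ H], rule exI[of _ K]) (use H K edge_H disjoint in auto)
qed

lemma cover_pairs_crossing:
  assumes "distinct [u, v, x, y]" "u \<in> V0" "v \<in> V1" "x \<in> V0" "y \<in> V1"
  shows "paired_cover_through V E V0 u v x y"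
proof -
  obtain p q p' q' where m: "p \<in> V0 - {u, x}" "q \<in> V0 - {u, x}" "p \<noteq> q"
    "p' \<in> W - {v, y}" "q' \<in> W - {v, y}" "p' \<noteq> q'" "E p p'" "E q q'"
    by (rule matching)
  obtain P1 Q1 where A: "is_path V E P1" "is_path V E Q1" "hd P1 = u" "last P1 = p" "hd Q1 = x"
    "last Q1 = q" "set P1 \<inter> set Q1 = {}" "set P1 \<union> set Q1 = V0"
    by (rule paired_cover_V0[of u p x q]) (use assms m in auto)
  obtain P2 Q2 where B: "is_path V E P2" "is_path V E Q2" "hd P2 = p'" "last P2 = v" "hd Q2 = q'"
    "last Q2 = y" "set P2 \<inter> set Q2 = {}" "set P2 \<union> set Q2 = V1"
    by (rule paired_cover_V1[of p' v q' y]) (use assms m W_subset in auto)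
  have ne: "P1 \<noteq> []" "Q1 \<noteq> []" "P2 \<noteq> []" "Q2 \<noteq> []"
    using A(1,2) B(1,2) by (auto simp: is_path_iff_successively)
  have "2 \<le> length P1" using length_ge_2_if_hd_neq_last[OF ne(1)] A(3,4) m(1) by auto
  hence edge_P: "traverses_edge_in V0 (P1 @ P2)"
    using A(8) by (intro traverses_edge_in_append(2) traverses_edge_in_subset) auto
  have P: "is_path V E (P1 @ P2)"
    by (rule is_path_append[OF A(1) B(1)]) (use A(4,8) B(3,8) m(7) disjoint in auto)
  have Q: "is_path V E (Q1 @ Q2)"
    by (rule is_path_append[OF A(2) B(2)]) (use A(6,8) B(5,8) m(8) disjoint in auto)
  show ?thesis unfolding paired_cover_through_def
    by (rule exI[of _ "P1 @ P2"], rule exI[of _ "Q1 @ Q2"]) (use A B P Q ne edge_P disjoint in auto)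
qed

lemma cover_u_in_V0:
  assumes d: "distinct [u, v, x, y]" and m: "u \<in> V0" "v \<in> V" "x \<in> V" "y \<in> V"
  shows "paired_cover_through V E V0 u v x y"
proof -
  have d': "distinct [u, v, y, x]" "distinct [x, y, u, v]" using d by auto
  note rev2 = paired_cover_through_rev_second[OF _ sym] and swap = paired_cover_through_swap
  consider "v \<in> V0" "x \<in> V0" "y \<in> V0" | "v \<in> V0" "x \<in> V0" "y \<in> V1"
    | "v \<in> V0" "x \<in> V1" "y \<in> V0" | "v \<in> V0" "x \<in> V1" "y \<in> V1"
    | "v \<in> V1" "x \<in> V0" "y \<in> V0" | "v \<in> V1" "x \<in> V0" "y \<in> V1"
    | "v \<in> V1" "x \<in> V1" "y \<in> V0" | "v \<in> V1" "x \<in> V1" "y \<in> V1"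
    using m by blast
  thus ?thesis
  proof cases
    case 1 thus ?thesis using cover_all_in_V0 d m by blast
  next
    case 2 thus ?thesis using cover_only_y_in_V1 d m by blast
  next
    case 3 thus ?thesis using rev2[OF cover_only_y_in_V1[of u v y x]] d' m by blast
  next
    case 4 thus ?thesis using cover_pairs_separated d m by blast
  next
    case 5 thus ?thesis using swap[OF cover_only_y_in_V1[of x y u v]] d' m by blast
  next
    case 6 thus ?thesis using cover_pairs_crossing d m by blast
  next
    case 7 thus ?thesis using rev2[OF cover_pairs_crossing[of u v y x]] d' m by blast
  next
    case 8 thus ?thesis using cover_only_u_in_V0 d m by blast
  qed
qed

lemma paired_2_coverable: "paired_2_coverable_through V E V0"
  unfolding paired_2_coverable_through_def
proof (intro ballI impI)
  fix u v x y assume m: "u \<in> V" "v \<in> V" "x \<in> V" "y \<in> V" and d: "distinct [u, v, x, y]"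
  have d': "distinct [v, u, x, y]" "distinct [x, y, u, v]" "distinct [y, x, u, v]" using d by auto
  note rev1 = paired_cover_through_rev_first[OF _ sym] and rev2 = paired_cover_through_rev_second[OF _ sym]
    and swap = paired_cover_through_swap
  consider "u \<in> V0" | "v \<in> V0" | "x \<in> V0" | "y \<in> V0" | "{u, v, x, y} \<subseteq> V1" using m by blast
  thus "paired_cover_through V E V0 u v x y"
  proof cases
    case 1 thus ?thesis using cover_u_in_V0 d m by blast
  next
    case 2 thus ?thesis using rev1[OF cover_u_in_V0[of v u x y]] d' m by blast
  next
    case 3 thus ?thesis using swap[OF cover_u_in_V0[of x y u v]] d' m by blast
  next
    case 4 thus ?thesis using rev2[OF swap[OF cover_u_in_V0[of y x u v]]] d' m by blast
  next
    case 5 thus ?thesis using cover_all_in_V1 d by blast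
  qed
qed

lemma splicable: "splicable V E V0"
  using hamiltonian_connected paired_2_coverable by (simp add: splicable_def)

end

lemma splicable_splice:
  assumes "V0 \<inter> V1 = {}" "W \<subseteq> V1" "\<And>a b. E a b \<Longrightarrow> E b a"
    and "splicable V0 E V0" "splicable V1 E W" "splice_link V0 W E"
  shows "splicable (V0 \<union> V1) E V0"
  by (rule splice.splicable) (unfold_locales; fact assms)

section \<open>The octahedron\<close>

locale octahedron =
  fixes V :: "'a set" and E :: "'a \<Rightarrow> 'a \<Rightarrow> bool" and \<sigma> :: "'a \<Rightarrow> 'a"
  assumes card_V: "card V = 6"
    and antipode_in: "\<And>a. a \<in> V \<Longrightarrow> \<sigma> a \<in> V"
    and antipode_neq: "\<And>a. a \<in> V \<Longrightarrow> \<sigma> a \<noteq> a"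
    and antipode_antipode: "\<And>a. a \<in> V \<Longrightarrow> \<sigma> (\<sigma> a) = a"
    and adj_iff: "\<And>a b. a \<in> V \<Longrightarrow> b \<in> V \<Longrightarrow> E a b \<longleftrightarrow> a \<noteq> b \<and> b \<noteq> \<sigma> a"
begin

lemma finite_V: "finite V"
  using card_V by (metis card.infinite zero_neq_numeral)

lemma neq_antipode: "a \<in> V \<Longrightarrow> a \<noteq> \<sigma> a"
  using antipode_neq by metis

lemma antipode_notin_image: "a \<in> V \<Longrightarrow> S \<subseteq> V \<Longrightarrow> a \<notin> S \<Longrightarrow> \<sigma> a \<notin> \<sigma> ` S"
  by (metis antipode_antipode image_iff subsetD)

lemma is_path_iff_no_antipodal_step:
  "is_path V E P \<longleftrightarrow> P \<noteq> [] \<and> distinct P \<and> set P \<subseteq> V \<and> successively (\<lambda>a b. b \<noteq> \<sigma> a) P"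
proof -
  have "successively E P \<longleftrightarrow> successively (\<lambda>a b. b \<noteq> \<sigma> a) P" if "distinct P" "set P \<subseteq> V"
  proof -
    have "successively (\<noteq>) P" using \<open>distinct P\<close> by (induction P rule: induct_list012) auto
    hence "successively (\<lambda>a b. a \<noteq> b \<and> b \<noteq> \<sigma> a) P \<longleftrightarrow> successively (\<lambda>a b. b \<noteq> \<sigma> a) P"
      by (induction P rule: induct_list012) auto
    moreover have "successively E P \<longleftrightarrow> successively (\<lambda>a b. a \<noteq> b \<and> b \<noteq> \<sigma> a) P"
      by (rule successively_cong) (use that adj_iff in auto)
    ultimately show ?thesis by simp
  qed
  thus ?thesis by (auto simp: is_path_iff_successively)
qed

lemma distinct_6_covers:
  assumes "distinct [a1, a2, a3, a4, a5, a6]" "{a1, a2, a3, a4, a5, a6} \<subseteq> V"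
  shows "{a1, a2, a3, a4, a5, a6} = V"
  using card_subset_eq[OF finite_V assms(2)] assms(1) card_V by simp

lemma remaining_pair:
  assumes "distinct [u, v, x, y]" "{u, v, x, y} \<subseteq> V"
  obtains r s where "distinct [u, v, x, y, r, s]" "V = {u, v, x, y, r, s}"
proof -
  have "card (V - {u, v, x, y}) = 2" using assms finite_V card_V by (simp add: card_Diff_subset)
  then obtain r s where rs: "r \<noteq> s" "V - {u, v, x, y} = {r, s}" by (meson card_2_iff)
  have "distinct [u, v, x, y, r, s]" using assms(1) rs by (auto simp: set_eq_iff)
  moreover have "V = {u, v, x, y, r, s}" using assms(2) rs(2) by blast
  ultimately show ?thesis by (rule that)
qed

lemma hamilton_path_to_antipode:
  assumes a: "a \<in> V"
  obtains P where "is_path V E P" "hd P = a" "last P = \<sigma> a" "set P = V"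
proof -
  have "card {a, \<sigma> a} = 2" using antipode_neq[OF a] by auto
  hence "card (V - {a, \<sigma> a}) = 4" using a finite_V card_V antipode_in
    by (simp add: card_Diff_subset)
  hence "V - {a, \<sigma> a} \<noteq> {}" by (intro notI) simp
  then obtain c where c: "c \<in> V" "c \<notin> {a, \<sigma> a}" by blast
  have "card {a, \<sigma> a, c, \<sigma> c} \<le> 4" using card_length[of "[a, \<sigma> a, c, \<sigma> c]"] by simp
  hence "card (V - {a, \<sigma> a, c, \<sigma> c}) \<ge> 2"
    using card_V diff_card_le_card_Diff[of "{a, \<sigma> a, c, \<sigma> c}" V] by simp
  hence "V - {a, \<sigma> a, c, \<sigma> c} \<noteq> {}" by (intro notI) simp
  then obtain d where d: "d \<in> V" "d \<notin> {a, \<sigma> a, c, \<sigma> c}" by blast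
  have "\<sigma> c \<notin> \<sigma> ` {a, \<sigma> a}" by (rule antipode_notin_image) (use a c antipode_in in auto)
  moreover have "\<sigma> d \<notin> \<sigma> ` {a, \<sigma> a, c, \<sigma> c}"
    by (rule antipode_notin_image) (use a c d antipode_in in auto)
  ultimately have sc: "\<sigma> c \<notin> {a, \<sigma> a}" and sd: "\<sigma> d \<notin> {a, \<sigma> a, c, \<sigma> c}"
    using a c d antipode_in antipode_antipode by auto
  let ?P = "[a, c, d, \<sigma> c, \<sigma> d, \<sigma> a]"
  have "distinct ?P"
    using a c d sc sd neq_antipode by auto
  moreover have "set ?P \<subseteq> V" using a c d antipode_in by auto
  moreover have "successively (\<lambda>a b. b \<noteq> \<sigma> a) ?P"
    using a c d sc sd antipode_in antipode_antipode by auto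
  ultimately show ?thesis
    using that[of ?P] distinct_6_covers[of a c d "\<sigma> c" "\<sigma> d" "\<sigma> a"]
    by (simp add: is_path_iff_no_antipodal_step)
qed

lemma hamilton_path_not_to_antipode:
  assumes ab: "a \<in> V" "b \<in> V" "a \<noteq> b" "b \<noteq> \<sigma> a"
  obtains P where "is_path V E P" "hd P = a" "last P = b" "set P = V"
proof -
  have "\<sigma> a \<noteq> \<sigma> b" "\<sigma> b \<noteq> a" using ab antipode_antipode by metis+
  hence "distinct [a, b, \<sigma> a, \<sigma> b]" using ab neq_antipode by auto
  then obtain c d where cd: "distinct [a, b, \<sigma> a, \<sigma> b, c, d]" "V = {a, b, \<sigma> a, \<sigma> b, c, d}"
    using remaining_pair[of a b "\<sigma> a" "\<sigma> b"] ab antipode_in by auto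
  have "\<sigma> c \<notin> \<sigma> ` {a, b, \<sigma> a, \<sigma> b}"
    using cd ab antipode_in by (intro antipode_notin_image) auto
  hence "\<sigma> c \<notin> {a, b, \<sigma> a, \<sigma> b}" using ab antipode_in antipode_antipode by auto
  moreover have "\<sigma> c \<in> V" "\<sigma> c \<noteq> c" using cd antipode_in antipode_neq by auto
  ultimately have sc: "\<sigma> c = d" using cd(2) by auto
  let ?P = "[a, \<sigma> b, c, \<sigma> a, d, b]"
  have "distinct ?P" "set ?P \<subseteq> V" using cd by auto
  moreover have "\<sigma> d = c" using sc cd antipode_antipode by auto
  hence "successively (\<lambda>a b. b \<noteq> \<sigma> a) ?P"
    using cd sc antipode_antipode[OF ab(1)] antipode_antipode[OF ab(2)] by auto
  ultimately have "is_path V E ?P" by (simp add: is_path_iff_no_antipodal_step)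
  moreover have "set ?P = V" using cd(2) by auto
  ultimately show ?thesis using that by simp
qed

lemma paired_cover_by_lists:
  assumes "distinct (P @ Q)" "set (P @ Q) = V" "P \<noteq> []" "2 \<le> length Q"
    "successively (\<lambda>a b. b \<noteq> \<sigma> a) P" "successively (\<lambda>a b. b \<noteq> \<sigma> a) Q"
  shows "paired_cover_through V E V (hd P) (last P) (hd Q) (last Q)"
proof -
  have "is_path V E P" "is_path V E Q" using assms by (auto simp: is_path_iff_no_antipodal_step)
  moreover have "traverses_edge_in V Q" using assms(2,4) by (intro traverses_edge_in_subset) auto
  ultimately show ?thesis unfolding paired_cover_through_def using assms(1,2)
    by (intro exI[of _ P] exI[of _ Q]) auto
qed

lemma cover_antipodal_rest:
  assumes d: "distinct [u, v, x, y, r, s]" and V: "V = {u, v, x, y, r, s}" and rs: "\<sigma> r = s"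
  shows "paired_cover_through V E V u v x y"
proof -
  have in_V: "u \<in> V" "x \<in> V" "r \<in> V" using V by auto
  have "\<sigma> s = r" using rs antipode_antipode[OF in_V(3)] by auto
  moreover have "r \<noteq> \<sigma> u" "s \<noteq> \<sigma> x"
    using rs \<open>\<sigma> s = r\<close> d antipode_antipode[OF in_V(1)] antipode_antipode[OF in_V(2)] by auto
  ultimately show ?thesis using paired_cover_by_lists[of "[u, r, v]" "[x, s, y]"] d V rs by auto
qed

lemma cover_with_edge_xy:
  assumes d: "distinct [u, v, x, y, r, s]" and V: "V = {u, v, x, y, r, s}"
    and rs: "\<sigma> r \<noteq> s" and xy: "y \<noteq> \<sigma> x"
  shows "paired_cover_through V E V u v x y"
proof -
  have in_V: "u \<in> V" "r \<in> V" "s \<in> V" using V by auto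
  have sr: "r \<noteq> \<sigma> s" using rs antipode_antipode[OF in_V(3)] by auto
  have cover: "paired_cover_through V E V u v x y"
    if rs': "r' \<noteq> s'" "{r', s'} = {r, s}" "r' \<noteq> \<sigma> u" "\<sigma> s' \<noteq> v" for r' s'
  proof -
    have "s' \<noteq> \<sigma> r'" using rs' rs sr by (auto simp: doubleton_eq_iff)
    moreover have "distinct ([u, r', s', v] @ [x, y])" "set ([u, r', s', v] @ [x, y]) = V"
      using rs'(1,2) d V by (auto simp: doubleton_eq_iff)
    moreover have "v \<noteq> \<sigma> s'" using rs'(4) by blast
    ultimately show ?thesis using paired_cover_by_lists[of "[u, r', s', v]" "[x, y]"] rs' xy by simp
  qed
  show ?thesis
  proof (cases "\<sigma> r \<noteq> u \<and> \<sigma> s \<noteq> v")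
    case True
    hence "r \<noteq> \<sigma> u" using antipode_antipode[OF in_V(1)] by auto
    moreover have "r \<noteq> s" "\<sigma> s \<noteq> v" using True d by auto
    ultimately show ?thesis using cover[of r s] by simp
  next
    case False
    have "\<sigma> r \<noteq> \<sigma> s"
      using d arg_cong[of "\<sigma> r" "\<sigma> s" \<sigma>] antipode_antipode[OF in_V(2)] antipode_antipode[OF in_V(3)]
      by auto
    hence "\<sigma> s \<noteq> u" "\<sigma> r \<noteq> v" using False d by auto
    hence "s \<noteq> \<sigma> u" using antipode_antipode[OF in_V(1)] by auto
    moreover have "s \<noteq> r" "{s, r} = {r, s}" using d by auto
    ultimately show ?thesis using cover[of s r] \<open>\<sigma> r \<noteq> v\<close> by simp
  qed
qed

lemma paired_2_coverable: "paired_2_coverable_through V E V"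
  unfolding paired_2_coverable_through_def
proof (intro ballI impI)
  fix u v x y assume m: "u \<in> V" "v \<in> V" "x \<in> V" "y \<in> V" and d4: "distinct [u, v, x, y]"
  obtain r s where d: "distinct [u, v, x, y, r, s]" and V: "V = {u, v, x, y, r, s}"
    using remaining_pair[OF d4] m by auto
  show "paired_cover_through V E V u v x y"
  proof (cases "\<sigma> r = s")
    case True thus ?thesis using cover_antipodal_rest d V by blast
  next
    case rs: False
    show ?thesis
    proof (cases "y = \<sigma> x \<and> v = \<sigma> u")
      case True
      have r: "r \<in> V" using V by auto
      have "\<sigma> r \<notin> \<sigma> ` {u, \<sigma> u, x, \<sigma> x}"
        by (rule antipode_notin_image) (use r d m True antipode_in in auto)
      hence "\<sigma> r \<notin> {u, v, x, y}"
        using True antipode_antipode[OF m(1)] antipode_antipode[OF m(3)] by auto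
      thus ?thesis using antipode_in[OF r] antipode_neq[OF r] V rs by auto
    next
      case False
      then consider "y \<noteq> \<sigma> x" | "v \<noteq> \<sigma> u" by blast
      thus ?thesis
      proof cases
        case 1 thus ?thesis by (rule cover_with_edge_xy[OF d V rs])
      next
        case 2
        have "paired_cover_through V E V x y u v"
          by (rule cover_with_edge_xy) (use d V rs 2 in auto)
        thus ?thesis by (rule paired_cover_through_swap)
      qed
    qed
  qed
qed

lemma hamiltonian_connected: "hamiltonian_connected_through V E V"
  unfolding hamiltonian_connected_through_def
proof (intro ballI impI)
  fix a b assume ab: "a \<in> V" "b \<in> V" "a \<noteq> b"
  obtain P where P: "is_path V E P" "hd P = a" "last P = b" "set P = V"
  proof (cases "b = \<sigma> a")
    case True thus ?thesis using that hamilton_path_to_antipode[OF ab(1)] by blast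
  next
    case False thus ?thesis using that hamilton_path_not_to_antipode[OF ab] by blast
  qed
  have "P \<noteq> []" using P(1) by (simp add: is_path_iff_successively)
  hence "traverses_edge_in V P"
    using length_ge_2_if_hd_neq_last P(2-4) ab(3) by (intro traverses_edge_in_subset) auto
  thus "\<exists>P. is_path V E P \<and> hd P = a \<and> last P = b \<and> set P = V \<and> traverses_edge_in V P"
    using P by blast
qed

lemma splicable: "splicable V E V"
  using hamiltonian_connected paired_2_coverable by (simp add: splicable_def)

end

definition ksubsets :: "'a set \<Rightarrow> nat \<Rightarrow> 'a set set" where
  "ksubsets X k = {S. S \<subseteq> X \<and> card S = k}"

lemma ksubsets_iff: "S \<in> ksubsets X k \<longleftrightarrow> S \<subseteq> X \<and> card S = k"
  by (simp add: ksubsets_def)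

lemma finite_ksubsets: "finite X \<Longrightarrow> finite (ksubsets X k)"
  unfolding ksubsets_def by (rule finite_subset[of _ "Pow X"]) auto

lemma finite_ksubsets_member: "finite X \<Longrightarrow> S \<in> ksubsets X k \<Longrightarrow> finite S"
  unfolding ksubsets_def using finite_subset by blast

lemma card_ksubsets: "finite X \<Longrightarrow> card (ksubsets X k) = card X choose k"
  unfolding ksubsets_def by (rule n_subsets)

lemma self_le_binomial: "0 < k \<Longrightarrow> k < m \<Longrightarrow> m \<le> m choose k"
proof (induction m arbitrary: k)
  case (Suc m)
  then obtain k' where k: "k = Suc k'" by (cases k) auto
  show ?case
  proof (cases "k' = 0")
    case False
    hence "m \<le> m choose k'" using Suc k by simp
    moreover have "0 < m choose Suc k'" using Suc.prems k by simp
    moreover have "Suc m choose k = (m choose k') + (m choose Suc k')" using k by simp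
    ultimately show ?thesis by linarith
  qed (use k in simp)
qed simp

lemma card_ksubsets_ge: "finite X \<Longrightarrow> 0 < k \<Longrightarrow> k < card X \<Longrightarrow> card X \<le> card (ksubsets X k)"
  using card_ksubsets self_le_binomial by metis

lemma obtain_subset_containing:
  assumes "finite T" "z \<in> T" "0 < a" "a \<le> card T"
  obtains S where "S \<subseteq> T" "z \<in> S" "card S = a"
proof -
  have "a - 1 \<le> card (T - {z})" using assms by simp
  then obtain U where U: "U \<subseteq> T - {z}" "card U = a - 1" "finite U"
    using obtain_subset_with_card_n by metis
  have "card (insert z U) = a" using U assms(3) by (simp add: subset_Diff_insert)
  thus ?thesis using that[of "insert z U"] U assms(2) by auto
qed

lemma obtain_superset_avoiding:
  assumes "finite X" "S \<subseteq> X" "z \<in> X - S" "card S \<le> b" "b < card X"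
  obtains T where "S \<subseteq> T" "T \<subseteq> X" "z \<notin> T" "card T = b"
proof -
  have fS: "finite S" using assms finite_subset by blast
  have "card (X - S - {z}) = card X - card S - 1" using assms fS by (simp add: card_Diff_subset)
  hence "b - card S \<le> card (X - S - {z})" using assms by linarith
  then obtain R where R: "R \<subseteq> X - S - {z}" "card R = b - card S" "finite R"
    using obtain_subset_with_card_n by metis
  have "card (S \<union> R) = b" using card_Un_disjoint[OF fS R(3)] R assms(4) by auto
  thus ?thesis using that[of "S \<union> R"] R assms by auto
qed

lemma card_supersets_ge:
  assumes "finite X" "S \<in> ksubsets X a" "a < b" "b < card X"
  shows "card X - a \<le> card {T \<in> ksubsets X b. S \<subseteq> T}"
proof -
  have S: "S \<subseteq> X" "card S = a" "finite S"
    using assms(1,2) finite_ksubsets_member by (auto simp: ksubsets_iff)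
  have "inj_on ((\<union>) S) (ksubsets (X - S) (b - a))"
    by (rule inj_onI) (auto simp: ksubsets_iff)
  hence "card (ksubsets (X - S) (b - a)) = card ((\<union>) S ` ksubsets (X - S) (b - a))"
    by (simp add: card_image)
  also have "\<dots> \<le> card {T \<in> ksubsets X b. S \<subseteq> T}"
  proof (rule card_mono)
    show "finite {T \<in> ksubsets X b. S \<subseteq> T}" using finite_ksubsets[OF assms(1)] by simp
    show "(\<union>) S ` ksubsets (X - S) (b - a) \<subseteq> {T \<in> ksubsets X b. S \<subseteq> T}"
    proof (rule image_subsetI)
      fix R assume "R \<in> ksubsets (X - S) (b - a)"
      hence "R \<subseteq> X - S" "card R = b - a" "finite R"
        using assms(1) by (auto simp: ksubsets_iff intro: finite_subset)
      moreover have "card (S \<union> R) = card S + card R"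
        using \<open>R \<subseteq> X - S\<close> \<open>finite R\<close> S(3) by (intro card_Un_disjoint) auto
      ultimately show "S \<union> R \<in> {T \<in> ksubsets X b. S \<subseteq> T}"
        using S assms(3) by (auto simp: ksubsets_iff)
    qed
  qed
  finally have "card (ksubsets (X - S) (b - a)) \<le> card {T \<in> ksubsets X b. S \<subseteq> T}" .
  moreover have "card (X - S) = card X - a" using S by (simp add: card_Diff_subset)
  moreover have "card (X - S) \<le> card (ksubsets (X - S) (b - a))"
    using card_ksubsets_ge[of "X - S" "b - a"] assms(1,3,4) \<open>card (X - S) = card X - a\<close> by simp
  ultimately show ?thesis by linarith
qed

lemma card_subsets_ge:
  assumes "finite X" "T \<in> ksubsets X b" "0 < a" "a < b"
  shows "b \<le> card {S \<in> ksubsets X a. S \<subseteq> T}"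
proof -
  have T: "T \<subseteq> X" "card T = b" "finite T"
    using assms(1,2) finite_ksubsets_member by (auto simp: ksubsets_iff)
  have "{S \<in> ksubsets X a. S \<subseteq> T} = ksubsets T a" using T(1) unfolding ksubsets_def by blast
  thus ?thesis using card_ksubsets_ge[OF T(3) assms(3)] T(2) assms(4) by simp
qed

lemma inj_on_supersets:
  assumes "finite X" "a < b" "b < card X"
  shows "inj_on (\<lambda>S. {T \<in> ksubsets X b. S \<subseteq> T}) (ksubsets X a)"
proof (rule inj_onI, rule ccontr)
  fix S1 S2 assume S: "S1 \<in> ksubsets X a" "S2 \<in> ksubsets X a" "S1 \<noteq> S2"
    and same: "{T \<in> ksubsets X b. S1 \<subseteq> T} = {T \<in> ksubsets X b. S2 \<subseteq> T}"
  have "\<not> S2 \<subseteq> S1"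
    using S card_subset_eq[OF finite_ksubsets_member[OF assms(1) S(1)]] by (auto simp: ksubsets_iff)
  then obtain z where z: "z \<in> S2" "z \<notin> S1" by blast
  have "z \<in> X - S1" "S1 \<subseteq> X" "card S1 \<le> b" using S z assms(2) by (auto simp: ksubsets_iff)
  then obtain T where "S1 \<subseteq> T" "T \<subseteq> X" "z \<notin> T" "card T = b"
    using obtain_superset_avoiding[OF assms(1)] assms(3) by metis
  hence "T \<in> {T \<in> ksubsets X b. S1 \<subseteq> T}" "T \<notin> {T \<in> ksubsets X b. S2 \<subseteq> T}"
    using z by (auto simp: ksubsets_iff)
  thus False using same by simp
qed

lemma inj_on_subsets:
  assumes "finite X" "0 < a" "a < b"
  shows "inj_on (\<lambda>T. {S \<in> ksubsets X a. S \<subseteq> T}) (ksubsets X b)"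
proof (rule inj_onI, rule ccontr)
  fix T1 T2 assume T: "T1 \<in> ksubsets X b" "T2 \<in> ksubsets X b" "T1 \<noteq> T2"
    and same: "{S \<in> ksubsets X a. S \<subseteq> T1} = {S \<in> ksubsets X a. S \<subseteq> T2}"
  have fin: "finite T1" using finite_ksubsets_member[OF assms(1) T(1)] .
  have "\<not> T1 \<subseteq> T2"
    using T card_subset_eq[OF finite_ksubsets_member[OF assms(1) T(2)]] by (auto simp: ksubsets_iff)
  then obtain z where z: "z \<in> T1" "z \<notin> T2" by blast
  obtain S where "S \<subseteq> T1" "z \<in> S" "card S = a"
    using obtain_subset_containing[OF fin z(1) assms(2)] T(1) assms(3) by (auto simp: ksubsets_iff)
  hence "S \<in> {S \<in> ksubsets X a. S \<subseteq> T1}" "S \<notin> {S \<in> ksubsets X a. S \<subseteq> T2}"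
    using T(1) z by (auto simp: ksubsets_iff)
  thus False using same by simp
qed

lemma avoiding_2_matching_converse:
  "avoiding_2_matching L R E \<Longrightarrow> avoiding_2_matching R L (\<lambda>b a. E a b)"
  unfolding avoiding_2_matching_def by metis

lemma avoiding_2_matching_if_injective_neighbourhoods:
  assumes "4 \<le> card L" "finite R"
    and degree: "\<And>a. a \<in> L \<Longrightarrow> 3 \<le> card {b\<in>R. E a b}"
    and inj: "inj_on (\<lambda>a. {b\<in>R. E a b}) L"
  shows "avoiding_2_matching L R E"
  unfolding avoiding_2_matching_def
proof (intro allI, rule ccontr)
  fix e1 e2 f1 f2
  let ?N = "\<lambda>a. {b\<in>R. E a b}"
  assume none: "\<not> (\<exists>p q p' q'. p \<in> L - {e1, e2} \<and> q \<in> L - {e1, e2} \<and> p \<noteq> q \<and>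
    p' \<in> R - {f1, f2} \<and> q' \<in> R - {f1, f2} \<and> p' \<noteq> q' \<and> E p p' \<and> E q q')"
  have "card L - card {e1, e2} \<le> card (L - {e1, e2})" by (rule diff_card_le_card_Diff) simp
  moreover have "card {e1, e2} \<le> 2" by (cases "e1 = e2") auto
  ultimately have "2 \<le> card (L - {e1, e2})" using assms(1) by linarith
  then obtain a1 a2 where a: "a1 \<in> L - {e1, e2}" "a2 \<in> L - {e1, e2}" "a1 \<noteq> a2"
    by (rule card_ge_2_obtains)
  have other: "?N a \<subseteq> {b, f1, f2}" if "a \<in> {a1, a2}" "b \<in> ?N a' - {f1, f2}" "a' \<in> {a1, a2}"
    "a \<noteq> a'" for a a' b
    using none a that by blast
  have full: "?N a = {b, f1, f2}" if "a \<in> L" "?N a \<subseteq> {b, f1, f2}" for a b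
  proof (rule card_seteq)
    have "card {b, f1, f2} \<le> 3" using card_length[of "[b, f1, f2]"] by simp
    thus "card {b, f1, f2} \<le> card (?N a)" using degree[OF that(1)] by linarith
  qed (use that in auto)
  have nonempty: "?N a - {f1, f2} \<noteq> {}" if "a \<in> L" for a
  proof
    assume "?N a - {f1, f2} = {}"
    hence "?N a \<subseteq> {f1, f2}" by blast
    hence "card (?N a) \<le> card {f1, f2}" by (intro card_mono) auto
    also have "\<dots> \<le> 2" by (cases "f1 = f2") auto
    finally show False using degree[OF that] by linarith
  qed
  obtain b1 b2 where b: "b1 \<in> ?N a1 - {f1, f2}" "b2 \<in> ?N a2 - {f1, f2}" using nonempty a by blast
  have "?N a1 \<subseteq> {b2, f1, f2}" "?N a2 \<subseteq> {b1, f1, f2}"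
    by (rule other; use a b in auto)+
  hence "?N a1 = {b2, f1, f2}" "?N a2 = {b1, f1, f2}" using full a by auto
  moreover have "b1 = b2" using b calculation by auto
  ultimately have "?N a1 = ?N a2" by simp
  thus False using inj a by (auto dest: inj_onD)
qed

lemma avoiding_2_matching_inclusion:
  assumes "finite X" "4 \<le> card X" "0 < a" "a < b" "b < card X"
  shows "avoiding_2_matching (ksubsets X a) (ksubsets X b) (\<subseteq>)"
proof (cases "3 \<le> b")
  case True
  have "avoiding_2_matching (ksubsets X b) (ksubsets X a) (\<lambda>T S. S \<subseteq> T)"
  proof (rule avoiding_2_matching_if_injective_neighbourhoods)
    show "4 \<le> card (ksubsets X b)" using card_ksubsets_ge[OF assms(1), of b] assms by linarith
    show "3 \<le> card {S \<in> ksubsets X a. S \<subseteq> T}" if "T \<in> ksubsets X b" for T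
      using card_subsets_ge[OF assms(1) that assms(3,4)] True by linarith
  qed (use finite_ksubsets[OF assms(1)] inj_on_subsets[OF assms(1,3,4)] in auto)
  thus ?thesis using avoiding_2_matching_converse by fastforce
next
  case False
  hence "a = 1" "b = 2" using assms(3,4) by auto
  show ?thesis
  proof (rule avoiding_2_matching_if_injective_neighbourhoods)
    show "4 \<le> card (ksubsets X a)" using card_ksubsets_ge[OF assms(1), of a] assms by linarith
    show "3 \<le> card {T \<in> ksubsets X b. S \<subseteq> T}" if "S \<in> ksubsets X a" for S
      using card_supersets_ge[OF assms(1) that assms(4,5)] \<open>a = 1\<close> assms(2) by linarith
  qed (use finite_ksubsets[OF assms(1)] inj_on_supersets[OF assms(1,4,5)] in auto)
qed

lemma splice_link_inclusion:
  assumes "finite X" "4 \<le> card X" "0 < a" "a < b" "b < card X"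
  shows "splice_link (ksubsets X a) (ksubsets X b) (\<subseteq>)"
  unfolding splice_link_def
proof (intro conjI ballI)
  show "2 \<le> card {T \<in> ksubsets X b. S \<subseteq> T}" if "S \<in> ksubsets X a" for S
    using card_supersets_ge[OF assms(1) that assms(4,5)] assms(4,5) by linarith
  show "2 \<le> card {S \<in> ksubsets X a. S \<subseteq> T}" if "T \<in> ksubsets X b" for T
    using card_subsets_ge[OF assms(1) that assms(3,4)] assms(3,4) by linarith
qed (rule avoiding_2_matching_inclusion[OF assms])

lemma splice_link_converse: "splice_link L R E \<Longrightarrow> splice_link R L (\<lambda>b a. E a b)"
  unfolding splice_link_def using avoiding_2_matching_converse by blast

lemma splice_link_image:
  assumes link: "splice_link L R E" and inj: "inj_on g R"
    and adj: "\<And>a b. a \<in> L \<Longrightarrow> b \<in> R \<Longrightarrow> E' a (g b) = E a b"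
  shows "splice_link L (g ` R) E'"
  unfolding splice_link_def
proof (intro conjI ballI)
  fix a assume "a \<in> L"
  hence "{w \<in> g ` R. E' a w} = g ` {b \<in> R. E a b}" using adj by auto
  moreover have "card (g ` {b \<in> R. E a b}) = card {b \<in> R. E a b}"
    using inj by (intro card_image) (auto intro: inj_on_subset)
  ultimately show "2 \<le> card {w \<in> g ` R. E' a w}" using link \<open>a \<in> L\<close> by (simp add: splice_link_def)
next
  fix w assume "w \<in> g ` R"
  then obtain b where "b \<in> R" "w = g b" by blast
  hence "{a \<in> L. E' a w} = {a \<in> L. E a b}" using adj by auto
  thus "2 \<le> card {a \<in> L. E' a w}" using link \<open>b \<in> R\<close> by (simp add: splice_link_def)
next
  show "avoiding_2_matching L (g ` R) E'" unfolding avoiding_2_matching_def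
  proof (intro allI)
    fix e1 e2 f1 f2
    let ?h = "inv_into R g"
    obtain p q p' q' where m: "p \<in> L - {e1, e2}" "q \<in> L - {e1, e2}" "p \<noteq> q"
      "p' \<in> R - {?h f1, ?h f2}" "q' \<in> R - {?h f1, ?h f2}" "p' \<noteq> q'" "E p p'" "E q q'"
      using link unfolding splice_link_def avoiding_2_matching_def by blast
    have "g p' \<notin> {f1, f2}" "g q' \<notin> {f1, f2}"
      using m(4,5) inj by (auto simp: inv_into_f_f)
    moreover have "g p' \<noteq> g q'" using m(4-6) inj by (auto dest: inj_onD)
    ultimately show "\<exists>p q p' q'. p \<in> L - {e1, e2} \<and> q \<in> L - {e1, e2} \<and> p \<noteq> q \<and>
      p' \<in> g ` R - {f1, f2} \<and> q' \<in> g ` R - {f1, f2} \<and> p' \<noteq> q' \<and> E' p p' \<and> E' q q'"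
      using m adj by (intro exI[of _ p] exI[of _ q] exI[of _ "g p'"] exI[of _ "g q'"]) auto
  qed
qed

section \<open>Johnson graphs\<close>

definition johnson_adj :: "'a set \<Rightarrow> 'a set \<Rightarrow> bool" where
  "johnson_adj S T \<longleftrightarrow> card S = card T \<and> card (S \<inter> T) + 1 = card S"

lemma johnson_adj_sym: "johnson_adj S T \<Longrightarrow> johnson_adj T S"
  unfolding johnson_adj_def by (simp add: Int_commute)

lemma johnson_adj_insert:
  assumes "finite A" "finite B" "x \<notin> A" "x \<notin> B"
  shows "johnson_adj (insert x A) (insert x B) = johnson_adj A B"
proof -
  have "insert x A \<inter> insert x B = insert x (A \<inter> B)" "x \<notin> A \<inter> B" using assms by auto
  thus ?thesis unfolding johnson_adj_def using assms by auto
qed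

lemma johnson_adj_insert_iff:
  assumes "finite X" "x \<notin> X" "T \<in> ksubsets X k" "S \<in> ksubsets X (k - 1)" "0 < k"
  shows "johnson_adj T (insert x S) \<longleftrightarrow> S \<subseteq> T"
proof -
  have fin: "finite S" "finite T" using assms finite_ksubsets_member by blast+
  have S: "x \<notin> S" "card S = k - 1" using assms by (auto simp: ksubsets_iff)
  hence "card (insert x S) = k" using fin(1) assms(5) by simp
  have "T \<inter> insert x S = T \<inter> S" using assms(2,3) by (auto simp: ksubsets_iff)
  moreover have "card (T \<inter> S) = card S \<longleftrightarrow> S \<subseteq> T"
    using card_subset_eq[OF fin(1), of "T \<inter> S"] by (auto simp: Int_absorb1)
  ultimately show ?thesis unfolding johnson_adj_def
    using S \<open>card (insert x S) = k\<close> assms(3,5) by (auto simp: ksubsets_iff)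
qed

lemma johnson_complete_1:
  "\<forall>S\<in>ksubsets X 1. \<forall>T\<in>ksubsets X 1. S \<noteq> T \<longrightarrow> johnson_adj S T"
  unfolding ksubsets_def johnson_adj_def by (auto simp: card_1_singleton_iff)

lemma johnson_complete_top:
  assumes "finite X"
  shows "\<forall>S\<in>ksubsets X (card X - 1). \<forall>T\<in>ksubsets X (card X - 1). S \<noteq> T \<longrightarrow> johnson_adj S T"
proof (intro ballI impI)
  fix S T assume S: "S \<in> ksubsets X (card X - 1)" and T: "T \<in> ksubsets X (card X - 1)" and "S \<noteq> T"
  have fin: "finite S" "finite T" using S T finite_ksubsets_member[OF assms] by auto
  have "\<not> S \<subseteq> T" using card_subset_eq[OF fin(2)] S T \<open>S \<noteq> T\<close> by (auto simp: ksubsets_iff)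
  hence "card (S \<inter> T) < card S" using fin by (intro psubset_card_mono) auto
  moreover have "card (S \<union> T) \<le> card X" using S T assms by (intro card_mono) (auto simp: ksubsets_iff)
  moreover have "card S + card T = card (S \<union> T) + card (S \<inter> T)" using card_Un_Int fin by blast
  ultimately show "johnson_adj S T" unfolding johnson_adj_def using S T by (auto simp: ksubsets_iff)
qed

(* J(4,2) is the octahedron: two 2-subsets are adjacent unless equal or complementary. *)
lemma splicable_johnson_4_2:
  assumes "finite X" "card X = 4"
  shows "splicable (ksubsets X 2) johnson_adj (ksubsets X 2)"
proof -
  interpret octahedron "ksubsets X 2" johnson_adj "\<lambda>S. X - S"
  proof
    show "card (ksubsets X 2) = 6" using card_ksubsets[OF assms(1)] assms(2) by (simp add: numeral_eq_Suc)
    fix S assume S: "S \<in> ksubsets X 2"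
    hence "S \<subseteq> X" "card S = 2" "finite S" using assms(1) finite_ksubsets_member by (auto simp: ksubsets_iff)
    thus "X - S \<in> ksubsets X 2" "X - (X - S) = S"
      using assms by (auto simp: ksubsets_iff card_Diff_subset)
    have "S \<noteq> {}" using \<open>card S = 2\<close> by auto
    thus "X - S \<noteq> S" by blast
  next
    fix S T assume "S \<in> ksubsets X 2" "T \<in> ksubsets X 2"
    hence S: "S \<subseteq> X" "card S = 2" "finite S" and T: "T \<subseteq> X" "card T = 2" "finite T"
      using assms(1) finite_ksubsets_member by (auto simp: ksubsets_iff)
    have "card (S \<inter> T) \<le> 2" using card_mono[OF S(3), of "S \<inter> T"] S by auto
    hence "card (S \<inter> T) = 0 \<or> card (S \<inter> T) = 1 \<or> card (S \<inter> T) = 2" by linarith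
    moreover have "johnson_adj S T \<longleftrightarrow> card (S \<inter> T) = 1" unfolding johnson_adj_def using S T by auto
    moreover have "card (S \<inter> T) = 2 \<longleftrightarrow> S = T"
      using card_subset_eq[OF S(3), of "S \<inter> T"] card_subset_eq[OF T(3), of S] S T by auto
    moreover have "card (S \<inter> T) = 0 \<longleftrightarrow> T = X - S"
    proof -
      have "card (X - S) = 2" using S assms(2) by (simp add: card_Diff_subset)
      hence "T \<subseteq> X - S \<longleftrightarrow> T = X - S" using card_subset_eq[of "X - S" T] assms(1) T by auto
      moreover have "card (S \<inter> T) = 0 \<longleftrightarrow> T \<subseteq> X - S" using S T by auto
      ultimately show ?thesis by simp
    qed
    ultimately show "johnson_adj S T \<longleftrightarrow> S \<noteq> T \<and> T \<noteq> X - S" by auto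
  qed
  show ?thesis by (rule splicable)
qed

lemma ksubsets_insert:
  assumes "finite X" "x \<notin> X" "0 < k"
  shows "ksubsets (insert x X) k = ksubsets X k \<union> insert x ` ksubsets X (k - 1)"
proof (intro equalityI subsetI)
  fix S assume S: "S \<in> ksubsets (insert x X) k"
  have "finite S" using S assms(1) by (auto simp: ksubsets_iff intro: finite_subset)
  show "S \<in> ksubsets X k \<union> insert x ` ksubsets X (k - 1)"
  proof (cases "x \<in> S")
    case True
    hence "S - {x} \<in> ksubsets X (k - 1)" "S = insert x (S - {x})"
      using S \<open>finite S\<close> by (auto simp: ksubsets_iff)
    thus ?thesis by blast
  qed (use S in \<open>auto simp: ksubsets_iff\<close>)
next
  fix S assume "S \<in> ksubsets X k \<union> insert x ` ksubsets X (k - 1)"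
  moreover have "card (insert x T) = k" if "T \<in> ksubsets X (k - 1)" for T
  proof -
    have "x \<notin> T" "card T = k - 1" using that assms(2) by (auto simp: ksubsets_iff)
    thus ?thesis using assms(3) finite_ksubsets_member[OF assms(1) that] by simp
  qed
  ultimately show "S \<in> ksubsets (insert x X) k" by (auto simp: ksubsets_iff)
qed

lemma splicable_johnson_step:
  assumes fin: "finite X" and x: "x \<notin> X" and "4 \<le> card X" "2 \<le> k" "k < card X"
    and splicable_k: "splicable (ksubsets X k) johnson_adj (ksubsets X k)"
    and splicable_k1: "splicable (ksubsets X (k - 1)) johnson_adj (ksubsets X (k - 1))"
  shows "splicable (ksubsets (insert x X) k) johnson_adj (ksubsets (insert x X) k)"
proof -
  let ?V0 = "ksubsets X k" and ?V1 = "insert x ` ksubsets X (k - 1)"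
  have inj: "inj_on (insert x) (ksubsets X (k - 1))"
    using x by (intro inj_onI) (auto simp: ksubsets_iff insert_ident)
  have splicable_V1: "splicable ?V1 johnson_adj ?V1"
    using splicable_k1 inj
  proof (rule splicable_image, intro ballI impI)
    fix A B assume A: "A \<in> ksubsets X (k - 1)" and B: "B \<in> ksubsets X (k - 1)" and "johnson_adj A B"
    moreover have "x \<notin> A" "x \<notin> B" using A B x by (auto simp: ksubsets_iff)
    ultimately show "johnson_adj (insert x A) (insert x B)"
      using johnson_adj_insert finite_ksubsets_member[OF fin] by metis
  qed
  have "splice_link ?V0 (ksubsets X (k - 1)) (\<lambda>T S. S \<subseteq> T)"
    using splice_link_converse[OF splice_link_inclusion[OF fin, of "k - 1" k]] assms by simp
  hence link: "splice_link ?V0 ?V1 johnson_adj"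
    using inj
  proof (rule splice_link_image)
    fix T S assume "T \<in> ksubsets X k" "S \<in> ksubsets X (k - 1)"
    thus "johnson_adj T (insert x S) = (S \<subseteq> T)"
      using johnson_adj_insert_iff[OF fin x] assms(4) by simp
  qed
  have "?V0 \<inter> ?V1 = {}" using x by (auto simp: ksubsets_iff)
  hence "splicable (?V0 \<union> ?V1) johnson_adj ?V0"
    by (rule splicable_splice[OF _ order_refl johnson_adj_sym splicable_k splicable_V1 link])
  hence "splicable (?V0 \<union> ?V1) johnson_adj (?V0 \<union> ?V1)" by (rule splicable_mono) simp
  thus ?thesis using ksubsets_insert[OF fin x] assms(4) by simp
qed

theorem splicable_johnson:
  "finite X \<Longrightarrow> 4 \<le> card X \<Longrightarrow> 0 < k \<Longrightarrow> k < card X \<Longrightarrow>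
    splicable (ksubsets X k) johnson_adj (ksubsets X k)"
proof (induction X arbitrary: k rule: finite_induct)
  case (insert x X)
  have card: "card (insert x X) = card X + 1" and fin: "finite (insert x X)"
    using insert.hyps by simp_all
  consider "k = 1" | "k = card X" | "card X = 3" "k = 2" | "4 \<le> card X" "2 \<le> k" "k < card X"
    using insert.prems card by linarith
  thus ?case
  proof cases
    case 1 thus ?thesis using splicable_complete[OF finite_ksubsets[OF fin] johnson_complete_1] by simp
  next
    case 2
    hence "k = card (insert x X) - 1" using card by simp
    thus ?thesis using splicable_complete[OF finite_ksubsets[OF fin] johnson_complete_top[OF fin]] by simp
  next
    case 3 thus ?thesis using splicable_johnson_4_2[OF fin] card by simp
  next
    case 4
    have "splicable (ksubsets X j) johnson_adj (ksubsets X j)" if "j \<in> {k, k - 1}" for j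
      using insert.IH 4 that by auto
    thus ?thesis using splicable_johnson_step[OF insert.hyps 4] by simp
  qed
qed simp

section \<open>The graphs QJ(n, A)\<close>

lemma QJ_adj_sym: "QJ_adj n A S T \<Longrightarrow> QJ_adj n A T S"
  unfolding QJ_adj_def by (auto simp: Int_commute)

lemma QJ_verts_empty: "QJ_verts n {} = {}"
  by (simp add: QJ_verts_def)

lemma QJ_verts_insert: "QJ_verts n (insert a A) = ksubsets {1..n} a \<union> QJ_verts n A"
  unfolding QJ_verts_def ksubsets_def by blast

lemma QJ_adj_same_card:
  assumes "S \<in> QJ_verts n A" "T \<in> QJ_verts n A" "card S = card T"
  shows "QJ_adj n A S T = johnson_adj S T"
  using assms unfolding QJ_adj_def johnson_adj_def consec_def by auto

lemma QJ_adj_consec: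
  assumes "consec A a b" "S \<in> ksubsets {1..n} a" "T \<in> ksubsets {1..n} b"
  shows "QJ_adj n A S T \<longleftrightarrow> S \<subseteq> T"
proof -
  have "\<not> T \<subseteq> S"
    using assms card_mono[of S T] by (auto simp: ksubsets_iff consec_def finite_subset dest: card_mono)
  thus ?thesis using assms by (auto simp: QJ_adj_def QJ_verts_def ksubsets_iff consec_def)
qed

lemma QJ_adj_insert_below:
  assumes "\<forall>c\<in>A. a < c" "S \<in> QJ_verts n A" "T \<in> QJ_verts n A"
  shows "QJ_adj n (insert a A) S T = QJ_adj n A S T"
proof -
  have "consec (insert a A) c d = consec A c d" if "c \<in> A" "d \<in> A" for c d
    using assms(1) that unfolding consec_def by auto
  thus ?thesis using assms(2,3) by (auto simp: QJ_adj_def QJ_verts_insert QJ_verts_def)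
qed

lemma consec_insert_Min:
  assumes "finite A" "A \<noteq> {}" "\<forall>c\<in>A. a < c"
  shows "consec (insert a A) a (Min A)"
  using assms by (auto simp: consec_def)

lemma splice_link_cong:
  assumes "splice_link L R E" "\<And>a b. a \<in> L \<Longrightarrow> b \<in> R \<Longrightarrow> E' a b = E a b"
  shows "splice_link L R E'"
  using splice_link_image[OF assms(1), of id E'] assms(2) by simp

lemma splicable_QJ_insert_min:
  assumes "4 \<le> n" "0 < a" "finite A" "A \<noteq> {}" "\<forall>c\<in>A. a < c" "Min A < n"
    and splicable_A: "splicable (QJ_verts n A) (QJ_adj n A) (ksubsets {1..n} (Min A))"
  shows "splicable (QJ_verts n (insert a A)) (QJ_adj n (insert a A)) (ksubsets {1..n} a)"
proof -
  let ?X = "{1..n}" and ?E = "QJ_adj n (insert a A)" and ?b = "Min A"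
  have b: "?b \<in> A" "a < ?b" using assms(3-5) by auto
  have "splicable (ksubsets ?X a) johnson_adj (ksubsets ?X a)"
    using splicable_johnson[of ?X a] assms(1,2,6) b(2) by simp
  hence splicable_V0: "splicable (ksubsets ?X a) ?E (ksubsets ?X a)"
    by (rule splicable_cong) (simp add: QJ_adj_same_card QJ_verts_insert ksubsets_iff)
  have splicable_V1: "splicable (QJ_verts n A) ?E (ksubsets ?X ?b)"
    by (rule splicable_cong[OF splicable_A]) (simp add: QJ_adj_insert_below[OF assms(5)])
  have "splice_link (ksubsets ?X a) (ksubsets ?X ?b) (\<subseteq>)"
    using splice_link_inclusion[of ?X a ?b] assms(1,2,6) b(2) by simp
  hence link: "splice_link (ksubsets ?X a) (ksubsets ?X ?b) ?E"
    by (rule splice_link_cong)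
      (simp add: QJ_adj_consec[OF consec_insert_Min[OF assms(3-5)]])
  have "ksubsets ?X a \<inter> QJ_verts n A = {}" "ksubsets ?X ?b \<subseteq> QJ_verts n A"
    using assms(5) b(1) unfolding QJ_verts_def ksubsets_def by auto
  from splicable_splice[OF this QJ_adj_sym splicable_V0 splicable_V1 link]
  show ?thesis by (simp add: QJ_verts_insert)
qed

theorem splicable_QJ:
  assumes "4 \<le> n" "A \<noteq> {}" "A \<subseteq> {1..n-1}"
  shows "splicable (QJ_verts n A) (QJ_adj n A) (ksubsets {1..n} (Min A))"
proof -
  have "finite A" using assms(3) finite_subset by blast
  thus ?thesis using assms(2,3)
  proof (induction A rule: finite_linorder_min_induct)
    case (insert a A)
    have a: "0 < a" "a < n" using insert.prems by auto
    show ?case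
    proof (cases "A = {}")
      case True
      have "splicable (ksubsets {1..n} a) johnson_adj (ksubsets {1..n} a)"
        using splicable_johnson[of "{1..n}" a] assms(1) a by simp
      hence "splicable (ksubsets {1..n} a) (QJ_adj n {a}) (ksubsets {1..n} a)"
        by (rule splicable_cong) (simp add: QJ_adj_same_card QJ_verts_insert QJ_verts_empty ksubsets_iff)
      thus ?thesis using True by (simp add: QJ_verts_insert QJ_verts_empty)
    next
      case False
      hence "Min A \<in> A" using insert.hyps(1) by simp
      hence "Min A \<le> n - 1" using insert.prems(2) by auto
      hence "Min A < n" using assms(1) by linarith
      hence "splicable (QJ_verts n (insert a A)) (QJ_adj n (insert a A)) (ksubsets {1..n} a)"
        using splicable_QJ_insert_min[OF assms(1) a(1) insert.hyps(1) False insert.hyps(2)]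
          insert.IH False insert.prems(2) by simp
      thus ?thesis using insert.hyps False by (simp add: Min_insert)
    qed
  qed simp
qed

theorem lemma8:
  fixes n :: nat and A :: "nat set"
  assumes "n \<ge> 4" and "A \<noteq> {}" and "A \<subseteq> {1..n-1}"
  shows "paired_2_coverable (QJ_verts n A) (QJ_adj n A)"
  using splicable_QJ[OF assms] by (rule splicable_imp_paired_2_coverable)

end
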